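(* Let $X \sim \mathcal{N}(\mu,\sigma^2)$ be a single observation, with $\mu\in\mathbb{R}$ and $\sigma>0$ unknown, and for $c>1$ let $I_1(c) = (X - c|X|,\; X + c|X|)$. Then the coverage probability $P_{\mu,\sigma}(\mu \in I_1(c))$ depends on $(\mu,\sigma)$ only through $\lambda=\mu/\sigma$ and is an even function of $\lambda$. Writing $\lambda = |\mu|/\sigma \ge 0$, it equals $$P_1(\lambda,c) = \Phi\Big(\frac{c}{c+1}\lambda\Big) + 1 - \Phi\Big(\frac{c}{c-1}\lambda\Big).$$ Over $\lambda\ge 0$, $P_1(\lambda,c)$ is minimized at $$\lambda^*(c) = \frac{c^2-1}{\sqrt{2}\,c^{3/2}}\sqrt{\log\frac{c+1}{c-1}}.$$ Consequently, for every $\alpha$ with $0<\alpha<1/2$ there exists a constant $c=c(\alpha)>1$ such that $\inf_{\mu\in\mathbb{R},\sigma>0} P_{\mu,\sigma}(\mu\in I_1(c(\alpha))) \ge 1-\alpha$.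
   Context: $\Phi$ denotes the standard normal cumulative distribution function. $I_1(c)$ is the (Abbott–Rosenblatt) interval centered at the single observation $X$ with half-length $c|X|$. *)

theory Defs
  imports "HOL-Probability.Probability"
begin

definition Phi :: "real \<Rightarrow> real" where
  "Phi t = measure (density lborel std_normal_density) {..t}"

definition normal_law :: "real \<Rightarrow> real \<Rightarrow> real measure" where
  "normal_law \<mu> \<sigma> = density lborel (normal_density \<mu> \<sigma>)"

definition coverage :: "real \<Rightarrow> real \<Rightarrow> real \<Rightarrow> real" where
  "coverage c \<mu> \<sigma> =
     measure (normal_law \<mu> \<sigma>) {x. x - c * \<bar>x\<bar> < \<mu> \<and> \<mu> < x + c * \<bar>x\<bar>}"

definition P1 :: "real \<Rightarrow> real \<Rightarrow> real" where
  "P1 l c = Phi (c / (c + 1) * l) + 1 - Phi (c / (c - 1) * l)"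

definition lambda_star :: "real \<Rightarrow> real" where
  "lambda_star c = (c\<^sup>2 - 1) / (sqrt 2 * c powr (3/2)) * sqrt (ln ((c + 1) / (c - 1)))"

end

theory Submission
  imports Defs
begin

text \<open>Standardizing \<open>z = (X - \<mu>) / \<sigma>\<close>, the event \<open>\<mu> \<in> I\<^sub>1(c)\<close> becomes
  \<open>\<bar>z\<bar> < c \<bar>\<lambda> + z\<bar>\<close> with \<open>\<lambda> = \<mu> / \<sigma>\<close>; its standard normal probability depends on \<open>\<lambda>\<close>
  only and is invariant under \<open>(\<lambda>, z) \<mapsto> (-\<lambda>, -z)\<close>. For \<open>\<lambda> \<ge> 0\<close> the event is
  \<open>z < -b\<lambda> \<or> z > -a\<lambda>\<close> with \<open>a = c/(c+1) < b = c/(c-1)\<close>, so the coverage is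
  \<open>1 - (\<Phi>(b\<lambda>) - \<Phi>(a\<lambda>))\<close>. Its derivative \<open>a \<phi>(a\<lambda>) - b \<phi>(b\<lambda>)\<close> changes sign exactly
  once on \<open>\<lambda> \<ge> 0\<close>, at \<open>\<lambda>\<^sup>2 (b\<^sup>2 - a\<^sup>2) = 2 ln (b/a)\<close>, which is \<open>\<lambda>*(c)\<^sup>2\<close>. Since
  \<open>\<phi> \<le> 1/2\<close>, the minimum is at least \<open>1 - (b - a) \<lambda>*(c) / 2 = 1 - sqrt (2 ln ((c+1)/(c-1)) / c) / 2\<close>,
  and for \<open>c = 1 + 1/\<alpha>\<close> this is at least \<open>1 - \<alpha>\<close> because \<open>ln (1 + 2\<alpha>) \<le> 2\<alpha>\<close>.\<close>

abbreviation std_normal :: "real measure" where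
  "std_normal \<equiv> density lborel std_normal_density"

lemma prob_space_std_normal: "prob_space std_normal"
  by (rule prob_space_normal_density) simp

lemma measure_std_normal_singleton: "measure std_normal {a} = 0"
proof -
  have "AE x in lborel. x \<in> {a} \<longrightarrow> std_normal_density x = 0"
    using AE_lborel_singleton[of a] by eventually_elim auto
  then have "{a} \<in> null_sets std_normal"
    by (subst null_sets_density_iff) auto
  then show ?thesis
    by (simp add: measure_def null_sets_def)
qed

lemma measure_std_normal_lessThan: "measure std_normal {..<t} = Phi t"
proof -
  interpret prob_space std_normal by (rule prob_space_std_normal)
  have "{..t} = {..<t} \<union> {t}"
    by auto
  then have "Phi t = measure std_normal ({..<t} \<union> {t})"
    unfolding Phi_def by simp
  also have "\<dots> = measure std_normal {..<t}"
    by (subst finite_measure_Union) (auto simp: measure_std_normal_singleton)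
  finally show ?thesis ..
qed

lemma measure_std_normal_greaterThan: "measure std_normal {t<..} = 1 - Phi t"
proof -
  interpret prob_space std_normal by (rule prob_space_std_normal)
  have "measure std_normal (space std_normal - {..t}) = 1 - Phi t"
    unfolding Phi_def by (rule prob_compl) auto
  moreover have "space std_normal - {..t} = {t<..}"
    by auto
  ultimately show ?thesis
    by simp
qed

lemma distr_std_normal_uminus: "distr std_normal lborel uminus = std_normal"
proof -
  interpret prob_space std_normal by (rule prob_space_std_normal)
  have "distributed std_normal lborel (\<lambda>x. x) std_normal_density"
    unfolding distributed_def by (auto simp: distr_id2)
  from normal_density_affine[OF this, where \<alpha>="-1" and \<beta>=0]
  show ?thesis
    unfolding distributed_def by (simp add: fun_eq_iff)
qed

lemma measure_std_normal_uminus: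
  assumes "A \<in> sets borel"
  shows "measure std_normal (uminus -` A) = measure std_normal A"
  using measure_distr[of uminus std_normal lborel A] assms
  by (simp add: distr_std_normal_uminus)

lemma Phi_uminus: "Phi (- t) = 1 - Phi t"
proof -
  interpret prob_space std_normal by (rule prob_space_std_normal)
  have "Phi (- t) = measure std_normal (uminus -` {..- t})"
    unfolding Phi_def by (simp add: measure_std_normal_uminus)
  also have "uminus -` {..- t} = {t<..} \<union> {t}"
    by auto
  also have "measure std_normal ({t<..} \<union> {t}) = measure std_normal {t<..}"
    by (subst finite_measure_Union) (auto simp: measure_std_normal_singleton)
  finally show ?thesis
    by (simp add: measure_std_normal_greaterThan)
qed

lemma measure_std_normal_atLeastAtMost:
  "measure std_normal {a..b} = integral {a..b} std_normal_density"
proof -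
  interpret prob_space std_normal by (rule prob_space_std_normal)
  have "measure std_normal {a..b} = (LINT x|std_normal. indicator {a..b} x)"
    by simp
  also have "\<dots> = (LINT x|lborel. std_normal_density x *\<^sub>R indicator {a..b} x)"
    by (subst integral_density) auto
  also have "\<dots> = (LINT x:{a..b}|lborel. std_normal_density x)"
    by (simp add: set_lebesgue_integral_def mult.commute)
  also have "\<dots> = integral {a..b} std_normal_density"
    using integrable_mult_indicator[of "{a..b}" lborel std_normal_density]
    by (intro set_borel_integral_eq_integral) (simp add: set_integrable_def)
  finally show ?thesis .
qed

lemma Phi_has_real_derivative: "(Phi has_real_derivative std_normal_density t) (at t)"
proof -
  interpret prob_space std_normal by (rule prob_space_std_normal)
  define a where "a = t - 1"
  have Phi_eq: "Phi u = measure std_normal {..<a} + integral {a..u} std_normal_density"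
    if "a \<le> u" for u
  proof -
    have "Phi u = measure std_normal ({..<a} \<union> {a..u})"
      unfolding Phi_def using that by (simp add: ivl_disj_un_one(4))
    then show ?thesis
      by (subst (asm) finite_measure_Union) (auto simp: measure_std_normal_atLeastAtMost)
  qed
  have "continuous_on {a..t + 1} std_normal_density"
    unfolding std_normal_density_def by (intro continuous_intros) auto
  then have "((\<lambda>u. integral {a..u} std_normal_density) has_real_derivative std_normal_density t)
      (at t within {a<..<t + 1})"
    by (rule integral_has_real_derivative[THEN DERIV_subset]) (auto simp: a_def)
  then have "((\<lambda>u. integral {a..u} std_normal_density) has_real_derivative std_normal_density t)
      (at t)"
    by (subst (asm) at_within_open) (auto simp: a_def)
  then have "((\<lambda>u. measure std_normal {..<a} + integral {a..u} std_normal_density)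
      has_real_derivative std_normal_density t) (at t)"
    using DERIV_add[OF DERIV_const] by fastforce
  then show ?thesis
    by (rule has_field_derivative_transform_within_open[of _ _ _ "{a<..<t + 1}"])
      (auto simp: Phi_eq a_def)
qed

lemma Phi_diff_le_half:
  assumes "x \<le> y"
  shows "Phi y - Phi x \<le> (y - x) / 2"
proof (cases "x = y")
  case False
  then obtain z where "Phi y - Phi x = (y - x) * std_normal_density z"
    using MVT2[of x y Phi std_normal_density] Phi_has_real_derivative assms by force
  moreover have "std_normal_density z \<le> 1 / 2"
  proof -
    have "exp (- (z\<^sup>2 / 2)) \<le> 1" and "2 \<le> sqrt (2 * pi)"
      using pi_gt3 by (auto simp: real_le_rsqrt)
    then have "exp (- (z\<^sup>2 / 2)) * 2 \<le> sqrt (2 * pi)"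
      by linarith
    then show ?thesis
      unfolding std_normal_density_def by (simp add: divide_le_eq)
  qed
  ultimately show ?thesis
    using assms mult_left_mono[of "std_normal_density z" "1 / 2" "y - x"] by simp
qed simp

lemma distr_normal_law_standardize:
  assumes "\<sigma> > 0"
  shows "distr (normal_law \<mu> \<sigma>) lborel (\<lambda>x. (x - \<mu>) / \<sigma>) = std_normal"
proof -
  interpret prob_space "normal_law \<mu> \<sigma>"
    unfolding normal_law_def using assms by (rule prob_space_normal_density)
  have "distributed (normal_law \<mu> \<sigma>) lborel (\<lambda>x. x) (normal_density \<mu> \<sigma>)"
    unfolding distributed_def normal_law_def by (auto simp: distr_id2)
  then show ?thesis
    using normal_standard_normal_convert[OF assms] by (simp add: distributed_def)
qed

definition std_coverage :: "real \<Rightarrow> real \<Rightarrow> real" where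
  "std_coverage c l = measure std_normal {z. \<bar>z\<bar> < c * \<bar>l + z\<bar>}"

lemma coverage_eq_std_coverage:
  assumes "\<sigma> > 0"
  shows "coverage c \<mu> \<sigma> = std_coverage c (\<mu> / \<sigma>)"
proof -
  let ?S = "{z. \<bar>z\<bar> < c * \<bar>\<mu> / \<sigma> + z\<bar>}"
  have "x - c * \<bar>x\<bar> < \<mu> \<and> \<mu> < x + c * \<bar>x\<bar> \<longleftrightarrow> \<bar>x - \<mu>\<bar> < c * \<bar>x\<bar>" for x
    by (auto simp: abs_less_iff)
  moreover have "\<bar>(x - \<mu>) / \<sigma>\<bar> < c * \<bar>\<mu> / \<sigma> + (x - \<mu>) / \<sigma>\<bar> \<longleftrightarrow> \<bar>x - \<mu>\<bar> < c * \<bar>x\<bar>" for x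
    using assms by (simp add: add_divide_distrib[symmetric] abs_divide divide_less_cancel)
  ultimately have "{x. x - c * \<bar>x\<bar> < \<mu> \<and> \<mu> < x + c * \<bar>x\<bar>} = (\<lambda>x. (x - \<mu>) / \<sigma>) -` ?S"
    by auto
  then have "coverage c \<mu> \<sigma> = measure (distr (normal_law \<mu> \<sigma>) lborel (\<lambda>x. (x - \<mu>) / \<sigma>)) ?S"
    unfolding coverage_def by (subst measure_distr) (auto simp: normal_law_def)
  then show ?thesis
    unfolding std_coverage_def distr_normal_law_standardize[OF assms] .
qed

lemma std_coverage_uminus: "std_coverage c (- l) = std_coverage c l"
proof -
  have "uminus -` {z. \<bar>z\<bar> < c * \<bar>l + z\<bar>} = {z. \<bar>z\<bar> < c * \<bar>- l + z\<bar>}"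
    by (auto simp: abs_minus_commute)
  then show ?thesis
    unfolding std_coverage_def using measure_std_normal_uminus[of "{z. \<bar>z\<bar> < c * \<bar>l + z\<bar>}"]
    by simp
qed

lemma abs_less_mult_abs_add_iff:
  fixes c l z :: real
  assumes c: "c > 1" and l: "l \<ge> 0"
  shows "\<bar>z\<bar> < c * \<bar>l + z\<bar> \<longleftrightarrow> z < - (c / (c - 1) * l) \<or> - (c / (c + 1) * l) < z"
proof -
  have "z < - (c / (c - 1) * l) \<longleftrightarrow> (c - 1) * z + c * l < 0"
    using c by (simp add: field_simps)
  moreover have "- (c / (c + 1) * l) < z \<longleftrightarrow> 0 < (c + 1) * z + c * l"
    using c by (simp add: field_simps) linarith
  moreover have "\<bar>z\<bar> < c * \<bar>l + z\<bar> \<longleftrightarrow> (c - 1) * z + c * l < 0 \<or> 0 < (c + 1) * z + c * l"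
  proof (cases "0 \<le> z")
    case True
    have "\<bar>z\<bar> = z" and "\<bar>l + z\<bar> = l + z"
      using l True by simp_all
    moreover have "0 \<le> c * l" and "z \<noteq> 0 \<Longrightarrow> 0 < (c - 1) * z"
      using c l True by simp_all
    ultimately show ?thesis
      by (cases "z = 0") (simp_all add: algebra_simps)
  next
    case False
    have "0 \<le> l + z \<longleftrightarrow> 0 \<le> c * (l + z)"
      using c by (simp add: zero_le_mult_iff)
    then show ?thesis
      using False by (cases "0 \<le> l + z") (auto simp: algebra_simps)
  qed
  ultimately show ?thesis
    by simp
qed

lemma std_coverage_eq_P1:
  assumes c: "c > 1" and l: "l \<ge> 0"
  shows "std_coverage c l = P1 l c"
proof -
  interpret prob_space std_normal by (rule prob_space_std_normal)
  let ?p = "- (c / (c - 1) * l)" and ?q = "- (c / (c + 1) * l)"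
  have "{z. \<bar>z\<bar> < c * \<bar>l + z\<bar>} = {..<?p} \<union> {?q<..}"
    using abs_less_mult_abs_add_iff[OF c l] by auto
  then have "std_coverage c l = measure std_normal ({..<?p} \<union> {?q<..})"
    unfolding std_coverage_def by simp
  also have "\<dots> = measure std_normal {..<?p} + measure std_normal {?q<..}"
  proof (rule finite_measure_Union)
    have "?p \<le> ?q"
      using c l by (auto intro!: mult_right_mono divide_left_mono)
    then show "{..<?p} \<inter> {?q<..} = {}"
      by auto
  qed auto
  finally show ?thesis
    by (simp add: measure_std_normal_lessThan measure_std_normal_greaterThan Phi_uminus P1_def)
qed

lemma coverage_eq_P1:
  assumes "c > 1" "\<sigma> > 0"
  shows "coverage c \<mu> \<sigma> = P1 (\<bar>\<mu>\<bar> / \<sigma>) c"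
proof -
  have "std_coverage c (\<mu> / \<sigma>) = std_coverage c (\<bar>\<mu>\<bar> / \<sigma>)"
    using std_coverage_uminus[of c "\<mu> / \<sigma>"] by (cases "\<mu> \<ge> 0") auto
  then show ?thesis
    using assms by (simp add: coverage_eq_std_coverage std_coverage_eq_P1)
qed

lemma scaled_std_normal_density_le_iff:
  fixes a b x :: real
  assumes "0 < a" "0 < b"
  shows "a * std_normal_density (a * x) \<le> b * std_normal_density (b * x)
    \<longleftrightarrow> ln a - a\<^sup>2 * x\<^sup>2 / 2 \<le> ln b - b\<^sup>2 * x\<^sup>2 / 2"
proof -
  have exp_form: "y * std_normal_density (y * x) = exp (ln y - y\<^sup>2 * x\<^sup>2 / 2) / sqrt (2 * pi)"
    if "0 < y" for y
    using that
    by (simp add: std_normal_density_def exp_diff exp_minus power_mult_distrib inverse_eq_divide)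
  show ?thesis
    using assms by (simp add: exp_form divide_le_cancel)
qed

lemma Phi_scaled_diff_minimum:
  fixes a b m l :: real
  assumes ab: "0 < a" "a < b" and m: "0 \<le> m" "m\<^sup>2 * (b\<^sup>2 - a\<^sup>2) = 2 * ln (b / a)"
    and l: "0 \<le> l"
  shows "Phi (a * m) - Phi (b * m) \<le> Phi (a * l) - Phi (b * l)"
proof -
  let ?g = "\<lambda>x. Phi (a * x) - Phi (b * x)"
  let ?g' = "\<lambda>x. a * std_normal_density (a * x) - b * std_normal_density (b * x)"
  have deriv: "(?g has_real_derivative ?g' x) (at x)" for x
    using DERIV_chain2[OF Phi_has_real_derivative DERIV_cmult_Id, of a x]
      DERIV_chain2[OF Phi_has_real_derivative DERIV_cmult_Id, of b x]
    by (auto intro: DERIV_diff simp: mult.commute)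
  have d: "0 < b\<^sup>2 - a\<^sup>2"
    using ab by (simp add: power_strict_mono)
  have "ln b - ln a = m\<^sup>2 * (b\<^sup>2 - a\<^sup>2) / 2"
    using ab m(2) by (simp add: ln_div)
  then have "ln a - a\<^sup>2 * x\<^sup>2 / 2 \<le> ln b - b\<^sup>2 * x\<^sup>2 / 2 \<longleftrightarrow> (b\<^sup>2 - a\<^sup>2) * x\<^sup>2 \<le> (b\<^sup>2 - a\<^sup>2) * m\<^sup>2"
    and "ln b - b\<^sup>2 * x\<^sup>2 / 2 \<le> ln a - a\<^sup>2 * x\<^sup>2 / 2 \<longleftrightarrow> (b\<^sup>2 - a\<^sup>2) * m\<^sup>2 \<le> (b\<^sup>2 - a\<^sup>2) * x\<^sup>2"
    for x
    by (auto simp: field_simps)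
  then have "ln a - a\<^sup>2 * x\<^sup>2 / 2 \<le> ln b - b\<^sup>2 * x\<^sup>2 / 2 \<longleftrightarrow> x\<^sup>2 \<le> m\<^sup>2"
    and "ln b - b\<^sup>2 * x\<^sup>2 / 2 \<le> ln a - a\<^sup>2 * x\<^sup>2 / 2 \<longleftrightarrow> m\<^sup>2 \<le> x\<^sup>2" for x
    using d by simp_all
  then have deriv_nonpos_iff: "?g' x \<le> 0 \<longleftrightarrow> x\<^sup>2 \<le> m\<^sup>2"
    and deriv_nonneg_iff: "0 \<le> ?g' x \<longleftrightarrow> m\<^sup>2 \<le> x\<^sup>2" for x
    using ab scaled_std_normal_density_le_iff[of a b x] scaled_std_normal_density_le_iff[of b a x]
    by simp_all
  show ?thesis
  proof (cases "l \<le> m")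
    case True
    show ?thesis
    proof (rule DERIV_nonpos_imp_nonincreasing[of l m ?g, OF True])
      fix x assume "l \<le> x" "x \<le> m"
      then have "x\<^sup>2 \<le> m\<^sup>2"
        using l by (intro power_mono) auto
      then show "\<exists>y. (?g has_real_derivative y) (at x) \<and> y \<le> 0"
        using deriv deriv_nonpos_iff by blast
    qed
  next
    case False
    show ?thesis
    proof (rule DERIV_nonneg_imp_nondecreasing[of m l ?g])
      show "m \<le> l"
        using False by simp
    next
      fix x assume "m \<le> x" "x \<le> l"
      then have "m\<^sup>2 \<le> x\<^sup>2"
        using m by (intro power_mono) auto
      then show "\<exists>y. (?g has_real_derivative y) (at x) \<and> 0 \<le> y"
        using deriv deriv_nonneg_iff by blast
    qed
  qed
qed

lemma lambda_star_nonneg: "c > 1 \<Longrightarrow> 0 \<le> lambda_star c"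
  by (simp add: lambda_star_def)

lemma lambda_star_squared:
  assumes "c > 1"
  shows "(lambda_star c)\<^sup>2 = (c\<^sup>2 - 1)\<^sup>2 / (2 * c ^ 3) * ln ((c + 1) / (c - 1))"
proof -
  have "(c powr (3 / 2))\<^sup>2 = c powr (3 / 2 + 3 / 2)"
    by (simp add: power2_eq_square powr_add[symmetric])
  also have "\<dots> = c ^ 3"
    using assms by (simp add: powr_realpow)
  finally have "(c powr (3 / 2))\<^sup>2 = c ^ 3" .
  then show ?thesis
    using assms by (simp add: lambda_star_def power_mult_distrib power_divide)
qed

lemma P1_scale_factors:
  fixes c :: real
  assumes "c > 1"
  shows "(c / (c - 1))\<^sup>2 - (c / (c + 1))\<^sup>2 = 4 * c ^ 3 / (c\<^sup>2 - 1)\<^sup>2"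
    and "c / (c - 1) - c / (c + 1) = 2 * c / (c\<^sup>2 - 1)"
proof -
  have "c\<^sup>2 - 1 = (c - 1) * (c + 1)"
    by (simp add: algebra_simps power2_eq_square)
  then show "(c / (c - 1))\<^sup>2 - (c / (c + 1))\<^sup>2 = 4 * c ^ 3 / (c\<^sup>2 - 1)\<^sup>2"
    and "c / (c - 1) - c / (c + 1) = 2 * c / (c\<^sup>2 - 1)"
    using assms by (simp_all add: divide_simps power2_eq_square power3_eq_cube)
      (simp_all add: algebra_simps)
qed

lemma P1_ge_P1_lambda_star:
  assumes c: "c > 1" and l: "0 \<le> l"
  shows "P1 (lambda_star c) c \<le> P1 l c"
proof -
  let ?a = "c / (c + 1)" and ?b = "c / (c - 1)"
  have ab: "0 < ?a" "?a < ?b"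
    using c by (auto intro: divide_strict_left_mono)
  have "c\<^sup>2 \<noteq> 1"
    using c by (simp add: power2_eq_1_iff)
  have "(lambda_star c)\<^sup>2 * (?b\<^sup>2 - ?a\<^sup>2)
      = (c\<^sup>2 - 1)\<^sup>2 / (2 * c ^ 3) * ln ((c + 1) / (c - 1)) * (4 * c ^ 3 / (c\<^sup>2 - 1)\<^sup>2)"
    unfolding lambda_star_squared[OF c] P1_scale_factors(1)[OF c] ..
  also have "\<dots> = 2 * ln ((c + 1) / (c - 1))"
    using \<open>c\<^sup>2 \<noteq> 1\<close> c by (simp add: field_simps)
  also have "(c + 1) / (c - 1) = ?b / ?a"
    using c by simp
  finally have "(lambda_star c)\<^sup>2 * (?b\<^sup>2 - ?a\<^sup>2) = 2 * ln (?b / ?a)" .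
  from Phi_scaled_diff_minimum[OF ab lambda_star_nonneg[OF c] this l]
  show ?thesis
    unfolding P1_def by (simp add: mult.commute)
qed

lemma P1_lower_bound:
  assumes c: "c > 1" and l: "0 \<le> l"
  shows "1 - sqrt (2 * ln ((c + 1) / (c - 1)) / c) / 2 \<le> P1 l c"
proof -
  let ?a = "c / (c + 1)" and ?b = "c / (c - 1)" and ?m = "lambda_star c"
  have "?a * ?m \<le> ?b * ?m"
    using c lambda_star_nonneg[OF c] by (intro mult_right_mono divide_left_mono) auto
  then have "Phi (?b * ?m) - Phi (?a * ?m) \<le> (?b - ?a) * ?m / 2"
    using Phi_diff_le_half by (simp add: left_diff_distrib)
  moreover have "(?b - ?a) * ?m = sqrt (2 * ln ((c + 1) / (c - 1)) / c)"
  proof (rule real_sqrt_unique[symmetric])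
    have "0 < c\<^sup>2 - 1"
      using c by (simp add: one_less_power)
    have "((?b - ?a) * ?m)\<^sup>2
        = (2 * c / (c\<^sup>2 - 1))\<^sup>2 * ((c\<^sup>2 - 1)\<^sup>2 / (2 * c ^ 3) * ln ((c + 1) / (c - 1)))"
      unfolding power_mult_distrib lambda_star_squared[OF c] P1_scale_factors(2)[OF c] ..
    also have "\<dots> = 2 * ln ((c + 1) / (c - 1)) / c"
    proof -
      have "(2 * c / d)\<^sup>2 * (d\<^sup>2 / (2 * c ^ 3) * L) = 2 * L / c" if "d \<noteq> 0" for d L
        using that c by (simp add: power_divide field_simps power2_eq_square power3_eq_cube)
      then show ?thesis
        using \<open>0 < c\<^sup>2 - 1\<close> by simp
    qed
    finally show "((?b - ?a) * ?m)\<^sup>2 = 2 * ln ((c + 1) / (c - 1)) / c" .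
    show "0 \<le> (?b - ?a) * ?m"
      using c \<open>0 < c\<^sup>2 - 1\<close> lambda_star_nonneg[OF c]
      by (simp add: P1_scale_factors(2)[OF c])
  qed
  ultimately have "1 - sqrt (2 * ln ((c + 1) / (c - 1)) / c) / 2 \<le> P1 ?m c"
    unfolding P1_def by simp
  then show ?thesis
    using P1_ge_P1_lambda_star[OF c l] by linarith
qed

lemma coverage_lower_bound:
  assumes \<alpha>: "\<alpha> > 0" and \<sigma>: "\<sigma> > 0"
  shows "1 - \<alpha> \<le> coverage (1 + 1 / \<alpha>) \<mu> \<sigma>"
proof -
  define c where "c = 1 + 1 / \<alpha>"
  have c: "c > 1"
    using \<alpha> by (simp add: c_def)
  have "(c + 1) / (c - 1) = 1 + 2 * \<alpha>"
    using \<alpha> by (simp add: c_def field_simps)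
  then have "ln ((c + 1) / (c - 1)) = ln (1 + 2 * \<alpha>)"
    by simp
  also have "\<dots> \<le> 2 * \<alpha>"
    using \<alpha> by (intro ln_add_one_self_le_self) simp
  finally have "2 * ln ((c + 1) / (c - 1)) / c \<le> 4 * \<alpha> / c"
    using c by (simp add: divide_right_mono)
  also have "\<dots> \<le> (2 * \<alpha>)\<^sup>2"
    using \<alpha> by (simp add: c_def field_simps power2_eq_square)
  finally have "sqrt (2 * ln ((c + 1) / (c - 1)) / c) \<le> 2 * \<alpha>"
    using \<alpha> by (intro real_le_lsqrt) auto
  then show ?thesis
    using P1_lower_bound[OF c, of "\<bar>\<mu>\<bar> / \<sigma>"] coverage_eq_P1[OF c \<sigma>, of \<mu>] \<sigma>
    by (simp add: c_def)
qed

theorem corollary1: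
  fixes c :: real
  assumes "c > 1"
  shows "(\<forall>\<mu> \<sigma> \<mu>' \<sigma>'. \<sigma> > 0 \<longrightarrow> \<sigma>' > 0 \<longrightarrow> \<mu> / \<sigma> = \<mu>' / \<sigma>' \<longrightarrow>
            coverage c \<mu> \<sigma> = coverage c \<mu>' \<sigma>')
       \<and> (\<forall>\<mu> \<sigma>. \<sigma> > 0 \<longrightarrow> coverage c (- \<mu>) \<sigma> = coverage c \<mu> \<sigma>)
       \<and> (\<forall>\<mu> \<sigma>. \<sigma> > 0 \<longrightarrow> coverage c \<mu> \<sigma> = P1 (\<bar>\<mu>\<bar> / \<sigma>) c)
       \<and> lambda_star c \<ge> 0
       \<and> (\<forall>l\<ge>0. P1 (lambda_star c) c \<le> P1 l c)
       \<and> (\<forall>\<alpha>. 0 < \<alpha> \<and> \<alpha> < 1/2 \<longrightarrow>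
            (\<exists>c'>1. \<forall>\<mu> \<sigma>. \<sigma> > 0 \<longrightarrow> coverage c' \<mu> \<sigma> \<ge> 1 - \<alpha>))"
proof (intro conjI allI impI)
  fix \<mu> \<sigma> \<mu>' \<sigma>' :: real
  assume "\<sigma> > 0" "\<sigma>' > 0" "\<mu> / \<sigma> = \<mu>' / \<sigma>'"
  then show "coverage c \<mu> \<sigma> = coverage c \<mu>' \<sigma>'"
    by (simp add: coverage_eq_std_coverage)
next
  fix \<mu> \<sigma> :: real
  assume "\<sigma> > 0"
  then show "coverage c (- \<mu>) \<sigma> = coverage c \<mu> \<sigma>"
    using std_coverage_uminus by (simp add: coverage_eq_std_coverage)
next
  fix \<mu> \<sigma> :: real
  assume "\<sigma> > 0"
  with assms show "coverage c \<mu> \<sigma> = P1 (\<bar>\<mu>\<bar> / \<sigma>) c"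
    by (rule coverage_eq_P1)
next
  show "lambda_star c \<ge> 0"
    using assms by (rule lambda_star_nonneg)
next
  fix l :: real
  assume "l \<ge> 0"
  with assms show "P1 (lambda_star c) c \<le> P1 l c"
    by (rule P1_ge_P1_lambda_star)
next
  fix \<alpha> :: real
  assume "0 < \<alpha> \<and> \<alpha> < 1 / 2"
  then show "\<exists>c'>1. \<forall>\<mu> \<sigma>. \<sigma> > 0 \<longrightarrow> coverage c' \<mu> \<sigma> \<ge> 1 - \<alpha>"
    by (intro exI[of _ "1 + 1 / \<alpha>"]) (simp add: coverage_lower_bound)
qed

end
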